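(* Let $Q=(Q_0,Q_1,\rho)$ be a finite $n$-properly-graded bound quiver with fixed basis $\mathcal M$ of $\Lambda_n$ as below. If $Q$ is nicely-graded, then $\mathbb Z|_{n-1}Q$ is also nicely-graded.
   Context: $k$ is a field. Bound quivers have relations that are linear combinations of paths of equal length $\ge 2$ with common source and target; paths are composed right to left; $s(p),t(p),l(p)$ denote source, target, length; $\Lambda=kQ/(\rho)$ is graded by path length and a bound path is a path with nonzero image. $Q$ is $n$-properly-graded if all maximal bound paths have length $n$. A walk is a sequence $w=(p_0,\dots,p_r)$ of paths with $l(p_h)>0$ for $0<h<r$, $t(p_{2h})=t(p_{2h+1})$, $s(p_{2h+1})=s(p_{2h+2})$, from $s(p_0)$ to $t(p_r)$ ($r$ even) or $s(p_r)$ ($r$ odd), cyclic if start equals end, with grade $\sum_h(-1)^hl(p_h)$; a quiver is nicely-graded if every cyclic walk has grade $0$. For $Q$ finite $n$-properly-graded, fix a basis $\mathcal M$ of $\Lambda_n$ consisting of images of maximal bound paths. The quiver $\mathbb Z|_{n-1}Q$ has vertex set $Q_0\times\mathbb Z$ and arrows $(\alpha,t):(i,t)\to(j,t)$ for each arrow $\alpha:i\to j$ of $Q$ and $t\in\mathbb Z$, and $(\beta_p,t):(t(p),t)\to(s(p),t+1)$ for each $p\in\mathcal M$ and $t\in\mathbb Z$. (Its relations, which play no role in being nicely-graded, are the lifts of the relations of the trivial extension $\Lambda\ltimes D\Lambda$.) *)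

theory Defs
  imports Main
begin

record ('v, 'a) quiver =
  qverts :: "'v set"
  qarrs  :: "'a set"
  qsrc   :: "'a \<Rightarrow> 'v"
  qtgt   :: "'a \<Rightarrow> 'v"

definition finite_quiver :: "('v, 'a) quiver \<Rightarrow> bool" where
  "finite_quiver Q \<longleftrightarrow> finite (qverts Q) \<and> finite (qarrs Q) \<and>
     (\<forall>\<alpha>\<in>qarrs Q. qsrc Q \<alpha> \<in> qverts Q \<and> qtgt Q \<alpha> \<in> qverts Q)"

text \<open>A path is a start vertex together with the list of its arrows in traversal order
  (the first arrow traversed comes first in the list).  Paths of length 0 are the trivial
  paths at the vertices.\<close>
type_synonym ('v, 'a) path = "'v \<times> 'a list"

definition is_path :: "('v, 'a) quiver \<Rightarrow> ('v, 'a) path \<Rightarrow> bool" where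
  "is_path Q p \<longleftrightarrow> fst p \<in> qverts Q \<and> set (snd p) \<subseteq> qarrs Q \<and>
     (snd p \<noteq> [] \<longrightarrow> qsrc Q (hd (snd p)) = fst p) \<and>
     (\<forall>k. Suc k < length (snd p) \<longrightarrow> qtgt Q (snd p ! k) = qsrc Q (snd p ! Suc k))"

definition psrc :: "('v, 'a) path \<Rightarrow> 'v" where
  "psrc p = fst p"

definition ptgt :: "('v, 'a) quiver \<Rightarrow> ('v, 'a) path \<Rightarrow> 'v" where
  "ptgt Q p = (if snd p = [] then fst p else qtgt Q (last (snd p)))"

definition plen :: "('v, 'a) path \<Rightarrow> nat" where
  "plen p = length (snd p)"

text \<open>Composition right to left: \<open>pcomp p q\<close> is "p after q" (first q, then p);
  it is meaningful when \<open>ptgt Q q = psrc p\<close>.\<close>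
definition pcomp :: "('v, 'a) path \<Rightarrow> ('v, 'a) path \<Rightarrow> ('v, 'a) path" where
  "pcomp p q = (fst q, snd q @ snd p)"

definition composable :: "('v, 'a) quiver \<Rightarrow> ('v, 'a) path \<Rightarrow> ('v, 'a) path \<Rightarrow> bool" where
  "composable Q p q \<longleftrightarrow> ptgt Q q = psrc p"

text \<open>Elements of the path algebra kQ are represented as finitely supported
  functions from paths to k.\<close>

definition supp :: "(('v, 'a) path \<Rightarrow> 'k::zero) \<Rightarrow> ('v, 'a) path set" where
  "supp f = {q. f q \<noteq> 0}"

definition delta :: "('v, 'a) path \<Rightarrow> ('v, 'a) path \<Rightarrow> 'k::{zero,one}" where
  "delta p = (\<lambda>x. if x = p then 1 else 0)"

text \<open>The product \<open>u f v\<close> in kQ of paths u, v and an element f.\<close>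
definition sandwich :: "('v, 'a) quiver \<Rightarrow> ('v, 'a) path \<Rightarrow> (('v, 'a) path \<Rightarrow> 'k::comm_ring_1)
     \<Rightarrow> ('v, 'a) path \<Rightarrow> ('v, 'a) path \<Rightarrow> 'k" where
  "sandwich Q u f v = (\<lambda>x. \<Sum>q\<in>supp f.
      if composable Q u q \<and> composable Q q v \<and> x = pcomp u (pcomp q v) then f q else 0)"

definition is_relation :: "('v, 'a) quiver \<Rightarrow> (('v, 'a) path \<Rightarrow> 'k::zero) \<Rightarrow> bool" where
  "is_relation Q r \<longleftrightarrow> finite (supp r) \<and>
     (\<exists>L i j. L \<ge> 2 \<and> (\<forall>q\<in>supp r. is_path Q q \<and> plen q = L \<and> psrc q = i \<and> ptgt Q q = j))"

inductive_set rel_ideal :: "('v, 'a) quiver \<Rightarrow> (('v, 'a) path \<Rightarrow> 'k::comm_ring_1) set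
     \<Rightarrow> (('v, 'a) path \<Rightarrow> 'k) set"
  for Q \<rho> where
  zero: "(\<lambda>_. 0) \<in> rel_ideal Q \<rho>"
| step: "\<lbrakk>f \<in> rel_ideal Q \<rho>; r \<in> \<rho>; is_path Q u; is_path Q v\<rbrakk>
          \<Longrightarrow> (\<lambda>x. f x + c * sandwich Q u r v x) \<in> rel_ideal Q \<rho>"

definition bound_quiver :: "('v, 'a) quiver \<Rightarrow> (('v, 'a) path \<Rightarrow> 'k::field) set \<Rightarrow> bool" where
  "bound_quiver Q \<rho> \<longleftrightarrow> (\<forall>r\<in>\<rho>. is_relation Q r)"

text \<open>A bound path: a path whose image in \<open>\<Lambda> = kQ/(\<rho>)\<close> is nonzero.\<close>
definition bound_path :: "('v, 'a) quiver \<Rightarrow> (('v, 'a) path \<Rightarrow> 'k::field) set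
     \<Rightarrow> ('v, 'a) path \<Rightarrow> bool" where
  "bound_path Q \<rho> p \<longleftrightarrow> is_path Q p \<and> (delta p :: ('v, 'a) path \<Rightarrow> 'k) \<notin> rel_ideal Q \<rho>"

definition maximal_bound_path :: "('v, 'a) quiver \<Rightarrow> (('v, 'a) path \<Rightarrow> 'k::field) set
     \<Rightarrow> ('v, 'a) path \<Rightarrow> bool" where
  "maximal_bound_path Q \<rho> p \<longleftrightarrow> bound_path Q \<rho> p \<and>
     \<not> (\<exists>u v. is_path Q u \<and> is_path Q v \<and> composable Q u p \<and> composable Q p v \<and>
             plen u + plen v > 0 \<and> bound_path Q \<rho> (pcomp u (pcomp p v)))"

definition properly_graded :: "nat \<Rightarrow> ('v, 'a) quiver \<Rightarrow> (('v, 'a) path \<Rightarrow> 'k::field) set \<Rightarrow> bool" where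
  "properly_graded n Q \<rho> \<longleftrightarrow> (\<forall>p. maximal_bound_path Q \<rho> p \<longrightarrow> plen p = n)"

text \<open>\<open>M\<close> is a set of maximal bound paths whose images form a basis of \<open>\<Lambda>_n\<close>
  (the degree-n part of \<open>\<Lambda>\<close>, spanned by the images of the paths of length n).\<close>
definition top_basis :: "nat \<Rightarrow> ('v, 'a) quiver \<Rightarrow> (('v, 'a) path \<Rightarrow> 'k::field) set
     \<Rightarrow> ('v, 'a) path set \<Rightarrow> bool" where
  "top_basis n Q \<rho> M \<longleftrightarrow>
     finite M \<and> (\<forall>p\<in>M. maximal_bound_path Q \<rho> p) \<and>
     (\<forall>c::('v, 'a) path \<Rightarrow> 'k. (\<lambda>x. if x \<in> M then c x else 0) \<in> rel_ideal Q \<rho>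
          \<longrightarrow> (\<forall>p\<in>M. c p = 0)) \<and>
     (\<forall>q. is_path Q q \<and> plen q = n \<longrightarrow>
          (\<exists>c::('v, 'a) path \<Rightarrow> 'k.
             (\<lambda>x. delta q x - (if x \<in> M then c x else 0)) \<in> rel_ideal Q \<rho>))"

definition is_walk :: "('v, 'a) quiver \<Rightarrow> ('v, 'a) path list \<Rightarrow> bool" where
  "is_walk Q w \<longleftrightarrow> w \<noteq> [] \<and> (\<forall>p\<in>set w. is_path Q p) \<and>
     (\<forall>h. 0 < h \<and> h < length w - 1 \<longrightarrow> plen (w ! h) > 0) \<and>
     (\<forall>h. 2*h + 1 < length w \<longrightarrow> ptgt Q (w ! (2*h)) = ptgt Q (w ! (2*h + 1))) \<and>
     (\<forall>h. 2*h + 2 < length w \<longrightarrow> psrc (w ! (2*h + 1)) = psrc (w ! (2*h + 2)))"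

definition walk_start :: "('v, 'a) path list \<Rightarrow> 'v" where
  "walk_start w = psrc (hd w)"

definition walk_end :: "('v, 'a) quiver \<Rightarrow> ('v, 'a) path list \<Rightarrow> 'v" where
  "walk_end Q w = (if even (length w - 1) then ptgt Q (last w) else psrc (last w))"

definition walk_grade :: "('v, 'a) path list \<Rightarrow> int" where
  "walk_grade w = (\<Sum>h<length w. (-1) ^ h * int (plen (w ! h)))"

definition nicely_graded :: "('v, 'a) quiver \<Rightarrow> bool" where
  "nicely_graded Q \<longleftrightarrow>
     (\<forall>w. is_walk Q w \<and> walk_start w = walk_end Q w \<longrightarrow> walk_grade w = 0)"

datatype ('a, 'p) zarrow = ZAlpha 'a int | ZBeta 'p int

text \<open>Underlying quiver of \<open>\<int>|_{n-1}Q\<close> (its relations play no role for being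
  nicely-graded).\<close>
definition Zquiver :: "('v, 'a) quiver \<Rightarrow> ('v, 'a) path set
     \<Rightarrow> ('v \<times> int, ('a, ('v, 'a) path) zarrow) quiver" where
  "Zquiver Q M = \<lparr> qverts = qverts Q \<times> UNIV,
     qarrs = {ZAlpha \<alpha> t | \<alpha> t. \<alpha> \<in> qarrs Q} \<union> {ZBeta p t | p t. p \<in> M},
     qsrc = (\<lambda>x. case x of ZAlpha \<alpha> t \<Rightarrow> (qsrc Q \<alpha>, t) | ZBeta p t \<Rightarrow> (ptgt Q p, t)),
     qtgt = (\<lambda>x. case x of ZAlpha \<alpha> t \<Rightarrow> (qtgt Q \<alpha>, t) | ZBeta p t \<Rightarrow> (psrc p, t + 1)) \<rparr>"

end

theory Submission
  imports Defs
begin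

text \<open>Count degrees along zigzags: traversing an arrow forwards raises a counter by one,
  traversing it backwards lowers it by one.  A quiver is nicely graded exactly when every closed
  zigzag returns the counter to its initial value, since walks and zigzags translate into each
  other with the grade of the walk equal to the change of the counter.  Now send a vertex
  \<open>(x, t)\<close> of \<open>\<int>|_{n-1}Q\<close> with counter \<open>i\<close> to the vertex \<open>x\<close> of \<open>Q\<close> with counter
  \<open>i - (n + 1) t\<close>: an arrow \<open>(\<alpha>, t)\<close> goes to \<open>\<alpha>\<close>, and an arrow \<open>(\<beta>_p, t)\<close>, which raises the
  level \<open>t\<close> by one, goes to the path \<open>p\<close> of length \<open>n\<close> traversed backwards.  Hence a closed
  zigzag of \<open>\<int>|_{n-1}Q\<close> projects to a closed zigzag of \<open>Q\<close> with the same change of counter.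
  Besides the arrows of \<open>Q\<close> joining vertices of \<open>Q\<close>, only the length \<open>n\<close> of the paths in
  \<open>M\<close> is used.\<close>

definition wf_quiver :: "('v, 'a) quiver \<Rightarrow> bool" where
  "wf_quiver X \<longleftrightarrow> (\<forall>a\<in>qarrs X. qsrc X a \<in> qverts X \<and> qtgt X a \<in> qverts X)"

lemma is_path_snoc:
  "is_path X (v, xs @ [a]) \<longleftrightarrow> is_path X (v, xs) \<and> a \<in> qarrs X \<and> qsrc X a = ptgt X (v, xs)"
  by (auto simp: is_path_def ptgt_def nth_append last_conv_nth less_Suc_eq hd_append split: if_splits)
    (metis One_nat_def diff_Suc_1)

lemma is_path_Cons:
  assumes "is_path X (qtgt X a, xs)" "a \<in> qarrs X" "qsrc X a \<in> qverts X"
  shows "is_path X (qsrc X a, a # xs)"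
  using assms by (auto simp: is_path_def nth_Cons hd_conv_nth split: nat.splits)

lemma ptgt_Cons: "ptgt X (v, a # xs) = ptgt X (qtgt X a, xs)"
  by (simp add: ptgt_def)

lemma is_path_arrow: "wf_quiver X \<Longrightarrow> a \<in> qarrs X \<Longrightarrow> is_path X (qsrc X a, [a])"
  by (simp add: is_path_def wf_quiver_def)

lemma is_walk_iff:
  "is_walk X w \<longleftrightarrow> w \<noteq> [] \<and> (\<forall>p\<in>set w. is_path X p) \<and>
     (\<forall>h. 0 < h \<and> h < length w - 1 \<longrightarrow> 0 < plen (w ! h)) \<and>
     (\<forall>k. Suc k < length w \<longrightarrow> (if even k then ptgt X (w ! k) = ptgt X (w ! Suc k)
                                      else psrc (w ! k) = psrc (w ! Suc k)))"
proof -
  have "(\<forall>h. 2*h + 1 < length w \<longrightarrow> ptgt X (w ! (2*h)) = ptgt X (w ! (2*h + 1))) \<and>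
        (\<forall>h. 2*h + 2 < length w \<longrightarrow> psrc (w ! (2*h + 1)) = psrc (w ! (2*h + 2))) \<longleftrightarrow>
        (\<forall>k. Suc k < length w \<longrightarrow> (if even k then ptgt X (w ! k) = ptgt X (w ! Suc k)
                                         else psrc (w ! k) = psrc (w ! Suc k)))"
    (is "?T \<and> ?S \<longleftrightarrow> ?J")
  proof
    assume J: ?J
    have "?T"
    proof (intro allI impI)
      fix h assume "2*h + 1 < length w"
      then show "ptgt X (w ! (2*h)) = ptgt X (w ! (2*h + 1))"
        using J[rule_format, of "2*h"] by simp
    qed
    moreover have "?S"
    proof (intro allI impI)
      fix h assume "2*h + 2 < length w"
      then show "psrc (w ! (2*h + 1)) = psrc (w ! (2*h + 2))"
        using J[rule_format, of "2*h + 1"] by simp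
    qed
    ultimately show "?T \<and> ?S" ..
  next
    assume TS: "?T \<and> ?S"
    show ?J
    proof (intro allI impI)
      fix k assume k: "Suc k < length w"
      show "if even k then ptgt X (w ! k) = ptgt X (w ! Suc k) else psrc (w ! k) = psrc (w ! Suc k)"
      proof (cases "even k")
        case True
        then obtain h where "k = 2*h"
          by (rule evenE)
        with TS k True show ?thesis
          by simp
      next
        case False
        then obtain h where "k = 2*h + 1"
          by (rule oddE)
        with TS k False show ?thesis
          by simp
      qed
    qed
  qed
  then show ?thesis
    unfolding is_walk_def by blast
qed

lemma is_walk_snoc:
  assumes "w \<noteq> []"
  shows "is_walk X (w @ [p]) \<longleftrightarrow> is_walk X w \<and> is_path X p \<and>
     (1 < length w \<longrightarrow> 0 < plen (last w)) \<and>
     walk_end X w = (if even (length w) then psrc p else ptgt X p)"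
proof -
  obtain m where m: "length w = Suc m"
    using assms by (cases w) auto
  have pos: "(\<forall>h. 0 < h \<and> h < length (w @ [p]) - 1 \<longrightarrow> 0 < plen ((w @ [p]) ! h)) \<longleftrightarrow>
      (\<forall>h. 0 < h \<and> h < length w - 1 \<longrightarrow> 0 < plen (w ! h)) \<and> (1 < length w \<longrightarrow> 0 < plen (last w))"
    using assms by (simp add: m nth_append last_conv_nth less_Suc_eq conj_disj_distribL all_conj_distrib)
      auto
  have joint: "(\<forall>k. Suc k < length (w @ [p]) \<longrightarrow>
        (if even k then ptgt X ((w @ [p]) ! k) = ptgt X ((w @ [p]) ! Suc k)
         else psrc ((w @ [p]) ! k) = psrc ((w @ [p]) ! Suc k))) \<longleftrightarrow>
      (\<forall>k. Suc k < length w \<longrightarrow>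
        (if even k then ptgt X (w ! k) = ptgt X (w ! Suc k) else psrc (w ! k) = psrc (w ! Suc k))) \<and>
      walk_end X w = (if even (length w) then psrc p else ptgt X p)"
    using assms
    by (simp add: m nth_append last_conv_nth less_Suc_eq conj_disj_distribL all_conj_distrib walk_end_def)
  show ?thesis
    unfolding is_walk_iff pos joint using assms by auto
qed

lemma is_walk_single: "is_walk X [p] \<longleftrightarrow> is_path X p"
  by (simp add: is_walk_def)

lemma walk_start_snoc: "walk_start (w @ [p]) = (if w = [] then psrc p else walk_start w)"
  by (simp add: walk_start_def)

lemma walk_end_snoc: "walk_end X (w @ [p]) = (if even (length w) then ptgt X p else psrc p)"
  by (simp add: walk_end_def)

lemma walk_grade_snoc: "walk_grade (w @ [p]) = walk_grade w + (-1) ^ length w * int (plen p)"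
  by (simp add: walk_grade_def nth_append)

inductive arrow_step :: "('v, 'a) quiver \<Rightarrow> 'v \<times> int \<Rightarrow> 'v \<times> int \<Rightarrow> bool" for X where
  "a \<in> qarrs X \<Longrightarrow> arrow_step X (qsrc X a, i) (qtgt X a, i + 1)"

text \<open>\<open>zigzag X (u, i) (v, j)\<close>: \<open>v\<close> is reached from \<open>u\<close> by traversing arrows forwards or
  backwards, \<open>j - i\<close> times more often forwards than backwards.\<close>
abbreviation zigzag :: "('v, 'a) quiver \<Rightarrow> 'v \<times> int \<Rightarrow> 'v \<times> int \<Rightarrow> bool" where
  "zigzag X \<equiv> (symclp (arrow_step X))\<^sup>*\<^sup>*"

lemma zigzag_arrow: "a \<in> qarrs X \<Longrightarrow> zigzag X (qsrc X a, i) (qtgt X a, i + 1)"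
  by (simp add: arrow_step.intros r_into_rtranclp)

lemma zigzag_path: "is_path X p \<Longrightarrow> zigzag X (psrc p, i) (ptgt X p, i + int (plen p))"
proof (induction "snd p" arbitrary: p rule: rev_induct)
  case Nil
  then show ?case by (simp add: ptgt_def psrc_def plen_def)
next
  case (snoc a xs)
  then have "is_path X (psrc p, xs)" "a \<in> qarrs X" "qsrc X a = ptgt X (psrc p, xs)"
    using is_path_snoc[of X "psrc p" xs a] by (simp_all add: psrc_def)
  with snoc.hyps(1) have "zigzag X (psrc p, i) (qsrc X a, i + int (length xs))"
    by (metis plen_def psrc_def fst_conv snd_conv)
  also have "zigzag X (qsrc X a, i + int (length xs)) (qtgt X a, i + int (length xs) + 1)"
    using \<open>a \<in> qarrs X\<close> by (rule zigzag_arrow)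
  finally show ?case
    by (simp add: ptgt_def plen_def ac_simps flip: snoc.hyps(2))
qed

lemma zigzag_of_walk: "is_walk X w \<Longrightarrow> zigzag X (walk_start w, i) (walk_end X w, i + walk_grade w)"
proof (induction w rule: rev_induct)
  case Nil
  then show ?case by (simp add: is_walk_def)
next
  case (snoc p w)
  show ?case
  proof (cases "w = []")
    case True
    with snoc.prems show ?thesis
      by (simp add: is_walk_single walk_start_def walk_end_def walk_grade_def zigzag_path)
  next
    case False
    have w: "is_walk X w" "is_path X p"
      and joint: "walk_end X w = (if even (length w) then psrc p else ptgt X p)"
      using is_walk_snoc[OF False] snoc.prems by simp_all
    let ?g = "i + walk_grade w"
    have "zigzag X (walk_start (w @ [p]), i) (walk_end X w, ?g)"
      using snoc.IH w(1) False by (simp add: walk_start_snoc)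
    also have "zigzag X (walk_end X w, ?g) (walk_end X (w @ [p]), i + walk_grade (w @ [p]))"
    proof (cases "even (length w)")
      case True
      then show ?thesis
        using joint zigzag_path[OF w(2), of ?g] by (simp add: walk_end_snoc walk_grade_snoc add.assoc)
    next
      case False
      have "zigzag X (ptgt X p, ?g) (psrc p, ?g - int (plen p))"
        using rtranclp_symclp_sym[OF zigzag_path[OF w(2), of "?g - int (plen p)"]] by simp
      with False joint show ?thesis
        by (simp add: walk_end_snoc walk_grade_snoc add_diff_eq)
    qed
    finally show ?thesis .
  qed
qed

lemma last_in_set_tl: "1 < length xs \<Longrightarrow> last xs \<in> set (tl xs)"
  by (cases xs) auto

lemma walk_append:
  assumes "is_walk X w" "\<forall>q\<in>set (tl w). 0 < plen q" "is_path X p" "0 < plen p"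
    and "walk_end X w = (if even (length w) then psrc p else ptgt X p)"
  shows "is_walk X (w @ [p])" "\<forall>q\<in>set (tl (w @ [p])). 0 < plen q"
proof -
  have "w \<noteq> []"
    using assms(1) by (simp add: is_walk_def)
  moreover have "1 < length w \<longrightarrow> 0 < plen (last w)"
    using assms(2) last_in_set_tl by blast
  ultimately show "is_walk X (w @ [p])"
    using is_walk_snoc assms(1,3,5) by blast
  show "\<forall>q\<in>set (tl (w @ [p])). 0 < plen q"
    using assms(2,4) \<open>w \<noteq> []\<close> by simp
qed

lemma walk_replace_last:
  assumes "is_walk X (w @ [p])" "\<forall>q\<in>set (tl (w @ [p])). 0 < plen q" "is_path X p'" "0 < plen p'"
    and "if even (length w) then psrc p' = psrc p else ptgt X p' = ptgt X p"
  shows "is_walk X (w @ [p'])" "\<forall>q\<in>set (tl (w @ [p'])). 0 < plen q"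
proof -
  show "is_walk X (w @ [p'])"
  proof (cases "w = []")
    case True
    then show ?thesis
      using assms(3) by (simp add: is_walk_def)
  next
    case False
    then show ?thesis
      using assms(1,3,5) is_walk_snoc[OF False] by (simp split: if_splits)
  qed
  show "\<forall>q\<in>set (tl (w @ [p'])). 0 < plen q"
    using assms(2,4) by (cases "w = []") simp_all
qed

lemma walk_extend_forward:
  assumes w: "is_walk X w" "\<forall>q\<in>set (tl w). 0 < plen q"
    and a: "a \<in> qarrs X" "qsrc X a = walk_end X w" and wf: "wf_quiver X"
  shows "\<exists>w'. is_walk X w' \<and> (\<forall>q\<in>set (tl w'). 0 < plen q) \<and> walk_start w' = walk_start w \<and>
           walk_end X w' = qtgt X a \<and> walk_grade w' = walk_grade w + 1"
proof -
  obtain w0 p where wp: "w = w0 @ [p]"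
    using w(1) by (metis is_walk_def rev_exhaust)
  have p: "is_path X p"
    using w(1) wp by (simp add: is_walk_def)
  show ?thesis
  proof (cases "even (length w0)")
    case True
    define p' where "p' = (psrc p, snd p @ [a])"
    have p': "is_path X p'" "psrc p' = psrc p" "ptgt X p' = qtgt X a" "plen p' = plen p + 1"
      using p a True is_path_snoc[of X "psrc p" "snd p" a]
      by (simp_all add: p'_def wp walk_end_snoc psrc_def ptgt_def plen_def)
    then have "is_walk X (w0 @ [p'])" "\<forall>q\<in>set (tl (w0 @ [p'])). 0 < plen q"
      using walk_replace_last[of X w0 p p'] w True by (simp_all add: wp)
    moreover have "walk_start (w0 @ [p']) = walk_start w"
      using p'(2) by (simp add: wp walk_start_snoc)
    ultimately show ?thesis
      using p' True by (intro exI[of _ "w0 @ [p']"]) (simp add: wp walk_end_snoc walk_grade_snoc)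
  next
    case False
    define p' where "p' = (qsrc X a, [a])"
    have p': "is_path X p'" "psrc p' = qsrc X a" "ptgt X p' = qtgt X a" "plen p' = 1"
      using is_path_arrow[OF wf a(1)] by (simp_all add: p'_def psrc_def ptgt_def plen_def)
    have "even (length w)" "w \<noteq> []"
      using False by (simp_all add: wp)
    then have "is_walk X (w @ [p'])" "\<forall>q\<in>set (tl (w @ [p'])). 0 < plen q"
      using walk_append[OF w p'(1)] p' a by simp_all
    with p' \<open>even (length w)\<close> \<open>w \<noteq> []\<close> show ?thesis
      by (intro exI[of _ "w @ [p']"]) (simp add: walk_start_snoc walk_end_snoc walk_grade_snoc)
  qed
qed

lemma walk_extend_backward:
  assumes w: "is_walk X w" "\<forall>q\<in>set (tl w). 0 < plen q"
    and a: "a \<in> qarrs X" "qtgt X a = walk_end X w" and wf: "wf_quiver X"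
  shows "\<exists>w'. is_walk X w' \<and> (\<forall>q\<in>set (tl w'). 0 < plen q) \<and> walk_start w' = walk_start w \<and>
           walk_end X w' = qsrc X a \<and> walk_grade w' = walk_grade w - 1"
proof -
  obtain w0 p where wp: "w = w0 @ [p]"
    using w(1) by (metis is_walk_def rev_exhaust)
  have p: "is_path X p"
    using w(1) wp by (simp add: is_walk_def)
  show ?thesis
  proof (cases "even (length w0)")
    case False
    define p' where "p' = (qsrc X a, a # snd p)"
    have "is_path X (qtgt X a, snd p)"
      using p a False by (simp add: wp walk_end_snoc psrc_def)
    then have p': "is_path X p'" "psrc p' = qsrc X a" "ptgt X p' = ptgt X p" "plen p' = plen p + 1"
      using is_path_Cons[of X a "snd p"] a False wf
      by (simp_all add: p'_def wp walk_end_snoc psrc_def ptgt_Cons plen_def wf_quiver_def)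
    then have "is_walk X (w0 @ [p'])" "\<forall>q\<in>set (tl (w0 @ [p'])). 0 < plen q"
      using walk_replace_last[of X w0 p p'] w False by (simp_all add: wp)
    moreover have "w0 \<noteq> []"
      using False by auto
    ultimately show ?thesis
      using p' False
      by (intro exI[of _ "w0 @ [p']"]) (simp add: wp walk_start_snoc walk_end_snoc walk_grade_snoc)
  next
    case True
    define p' where "p' = (qsrc X a, [a])"
    have p': "is_path X p'" "psrc p' = qsrc X a" "ptgt X p' = qtgt X a" "plen p' = 1"
      using is_path_arrow[OF wf a(1)] by (simp_all add: p'_def psrc_def ptgt_def plen_def)
    have "odd (length w)" "w \<noteq> []"
      using True by (simp_all add: wp)
    then have "is_walk X (w @ [p'])" "\<forall>q\<in>set (tl (w @ [p'])). 0 < plen q"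
      using walk_append[OF w p'(1)] p' a by simp_all
    with p' \<open>odd (length w)\<close> \<open>w \<noteq> []\<close> show ?thesis
      by (intro exI[of _ "w @ [p']"]) (simp add: walk_start_snoc walk_end_snoc walk_grade_snoc)
  qed
qed

text \<open>The invariant that all paths after the first are nontrivial guarantees that a new
  path can always be appended.\<close>
lemma walk_of_zigzag:
  assumes "zigzag X (u, i) y" and u: "u \<in> qverts X" and wf: "wf_quiver X"
  shows "\<exists>w. is_walk X w \<and> (\<forall>q\<in>set (tl w). 0 < plen q) \<and> walk_start w = u \<and>
           walk_end X w = fst y \<and> walk_grade w = snd y - i"
  using assms(1)
proof (induction rule: rtranclp_induct)
  case base
  have "is_walk X [(u, [])]"
    using u by (simp add: is_walk_single is_path_def)
  then show ?case
    by (intro exI[of _ "[(u, [])]"])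
      (simp add: walk_start_def walk_end_def walk_grade_def psrc_def ptgt_def plen_def)
next
  case (step y z)
  then obtain w where w: "is_walk X w" "\<forall>q\<in>set (tl w). 0 < plen q" "walk_start w = u"
    "walk_end X w = fst y" "walk_grade w = snd y - i"
    by blast
  from step.hyps(2) show ?case
  proof (cases rule: symclpE)
    case base
    then obtain a where "a \<in> qarrs X" "qsrc X a = fst y" "z = (qtgt X a, snd y + 1)"
      by (auto elim: arrow_step.cases)
    with walk_extend_forward[OF w(1,2) _ _ wf, of a] w(3-5) show ?thesis
      by auto
  next
    case sym
    then obtain a where "a \<in> qarrs X" "qtgt X a = fst y" "z = (qsrc X a, snd y - 1)"
      by (auto elim: arrow_step.cases)
    with walk_extend_backward[OF w(1,2) _ _ wf, of a] w(3-5) show ?thesis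
      by auto
  qed
qed

lemma nicely_graded_zigzagI:
  assumes "\<And>u i j. u \<in> qverts X \<Longrightarrow> zigzag X (u, i) (u, j) \<Longrightarrow> i = j"
  shows "nicely_graded X"
  unfolding nicely_graded_def
proof (intro allI impI)
  fix w assume "is_walk X w \<and> walk_start w = walk_end X w"
  then have "is_walk X w" and closed: "walk_start w = walk_end X w"
    by blast+
  then have "is_path X (hd w)"
    by (simp add: is_walk_def)
  then have "walk_start w \<in> qverts X"
    by (simp add: walk_start_def is_path_def psrc_def)
  moreover have "zigzag X (walk_start w, 0) (walk_start w, walk_grade w)"
    using zigzag_of_walk[OF \<open>is_walk X w\<close>, of 0] closed by simp
  ultimately show "walk_grade w = 0"
    using assms by force
qed

lemma nicely_graded_zigzagD:
  assumes "nicely_graded X" and "zigzag X (u, i) (u, j)" and "u \<in> qverts X" and "wf_quiver X"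
  shows "i = j"
proof -
  obtain w where "is_walk X w" "walk_start w = u" "walk_end X w = u" "walk_grade w = j - i"
    using walk_of_zigzag[OF assms(2-4)] by auto
  with assms(1) show ?thesis
    unfolding nicely_graded_def by force
qed

lemma zigzag_map:
  assumes "\<And>x y. arrow_step X x y \<Longrightarrow> zigzag Y (f x) (f y)" and "zigzag X x y"
  shows "zigzag Y (f x) (f y)"
  using assms(2)
proof (induction rule: rtranclp_induct)
  case (step y z)
  from step.hyps(2) have "zigzag Y (f y) (f z)"
    by (cases rule: symclpE) (auto dest: assms(1) rtranclp_symclp_sym)
  with step.IH show ?case
    by (rule rtranclp_trans)
qed simp

lemma zigzag_Zquiver_project:
  fixes Q :: "('v, 'a) quiver"
  assumes M: "\<forall>p\<in>M. is_path Q p \<and> plen p = n"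
    and "zigzag (Zquiver Q M) ((x, s), i) ((y, t), j)"
  shows "zigzag Q (x, i - int (n + 1) * s) (y, j - int (n + 1) * t)"
proof -
  define proj :: "('v \<times> int) \<times> int \<Rightarrow> 'v \<times> int" where
    "proj = (\<lambda>((x, s), i). (x, i - int (n + 1) * s))"
  have "zigzag Q (proj u) (proj v)" if "arrow_step (Zquiver Q M) u v" for u v
    using that
  proof cases
    case (1 e i)
    show ?thesis
    proof (cases e)
      case (ZAlpha \<alpha> s)
      with 1 show ?thesis
        using zigzag_arrow[of \<alpha> Q "i - int (n + 1) * s"]
        by (auto simp: proj_def Zquiver_def algebra_simps)
    next
      case (ZBeta p s)
      with 1 M have "p \<in> M" "is_path Q p" "plen p = n"
        by (auto simp: Zquiver_def)
      then have "zigzag Q (ptgt Q p, i - int (n + 1) * s) (psrc p, i - int (n + 1) * s - int n)"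
        using rtranclp_symclp_sym[OF zigzag_path[of Q p "i - int (n + 1) * s - int n"]] by simp
      with 1 ZBeta show ?thesis
        by (simp add: proj_def Zquiver_def algebra_simps)
    qed
  qed
  from zigzag_map[of "Zquiver Q M" Q proj, OF this assms(2)] show ?thesis
    by (simp add: proj_def)
qed

lemma top_basis_path_length:
  assumes "properly_graded n Q \<rho>" and "top_basis n Q \<rho> M" and "p \<in> M"
  shows "is_path Q p \<and> plen p = n"
proof -
  from assms(2,3) have "maximal_bound_path Q \<rho> p"
    by (simp add: top_basis_def)
  with assms(1) show ?thesis
    unfolding properly_graded_def maximal_bound_path_def bound_path_def by blast
qed

theorem theorem4p7:
  fixes Q :: "('v, 'a) quiver"
    and \<rho> :: "(('v, 'a) path \<Rightarrow> 'k::field) set"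
    and n :: nat
    and M :: "('v, 'a) path set"
  assumes "finite_quiver Q"
    and "bound_quiver Q \<rho>"
    and "properly_graded n Q \<rho>"
    and "top_basis n Q \<rho> M"
    and "nicely_graded Q"
  shows "nicely_graded (Zquiver Q M)"
proof (rule nicely_graded_zigzagI)
  have M: "\<forall>p\<in>M. is_path Q p \<and> plen p = n"
    using top_basis_path_length[OF assms(3,4)] by blast
  have wf: "wf_quiver Q"
    using assms(1) by (simp add: finite_quiver_def wf_quiver_def)
  fix u i j
  assume u: "u \<in> qverts (Zquiver Q M)" and closed: "zigzag (Zquiver Q M) (u, i) (u, j)"
  obtain x t where xt: "u = (x, t)"
    by (cases u)
  have "x \<in> qverts Q"
    using u xt by (simp add: Zquiver_def)
  moreover have "zigzag Q (x, i - int (n + 1) * t) (x, j - int (n + 1) * t)"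
    using zigzag_Zquiver_project[OF M] closed xt by blast
  ultimately have "i - int (n + 1) * t = j - int (n + 1) * t"
    using nicely_graded_zigzagD[OF assms(5) _ _ wf] by blast
  then show "i = j"
    by simp
qed

end
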